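(* Let $\Gamma$ be a Cayley graph on $n$ vertices, and let $s$ be the order of the stabilizer in $\operatorname{Aut}(\Gamma)$ of a vertex. Then $\Gamma$ is $k$-uniformly vertex-transitive for every integer $k$ with $1\le k\le s$.
   Context: A Cayley graph $C(G,S)$, for a finite group $G$ and subset $S\subset G$, has vertex set $G$, with $a,b$ adjacent iff $a=sb$ or $b=sa$ for some $s\in S$; a graph is Cayley if isomorphic to some $C(G,S)$. A permutation $\sigma$ of $V(\Gamma)$ is identified with its permutation matrix (the $(u,v)$ entry is $1$ iff $\sigma(u)=v$); $J_n$ is the $n\times n$ all-ones matrix. For $k\ge1$, $\Gamma$ is $k$-uniformly vertex-transitive if there is a set of $kn$ distinct automorphisms $\{\sigma_1,\ldots,\sigma_{kn}\}\subset\operatorname{Aut}(\Gamma)$ with $\sum_i\sigma_i=kJ_n$. *)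

theory Defs
  imports "HOL-Algebra.Group" "HOL-Combinatorics.Permutations"
begin

definition cayley_adj :: "('g, 'b) monoid_scheme \<Rightarrow> 'g set \<Rightarrow> 'g \<Rightarrow> 'g \<Rightarrow> bool" where
  "cayley_adj G S a b \<longleftrightarrow> (\<exists>s\<in>S. a = s \<otimes>\<^bsub>G\<^esub> b \<or> b = s \<otimes>\<^bsub>G\<^esub> a)"

definition is_cayley_graph :: "'a set \<Rightarrow> ('a \<Rightarrow> 'a \<Rightarrow> bool) \<Rightarrow> bool" where
  "is_cayley_graph V E \<longleftrightarrow>
     (\<exists>(G :: 'a monoid) S f. group G \<and> finite (carrier G) \<and> S \<subseteq> carrier G \<and>
        bij_betw f V (carrier G) \<and>
        (\<forall>u\<in>V. \<forall>v\<in>V. E u v \<longleftrightarrow> cayley_adj G S (f u) (f v)))"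

definition graph_aut :: "'a set \<Rightarrow> ('a \<Rightarrow> 'a \<Rightarrow> bool) \<Rightarrow> ('a \<Rightarrow> 'a) set" where
  "graph_aut V E = {\<sigma>. \<sigma> permutes V \<and> (\<forall>u\<in>V. \<forall>v\<in>V. E u v \<longleftrightarrow> E (\<sigma> u) (\<sigma> v))}"

definition vertex_stabilizer :: "'a set \<Rightarrow> ('a \<Rightarrow> 'a \<Rightarrow> bool) \<Rightarrow> 'a \<Rightarrow> ('a \<Rightarrow> 'a) set" where
  "vertex_stabilizer V E v = {\<sigma> \<in> graph_aut V E. \<sigma> v = v}"

text \<open>k-uniformly vertex-transitive: a set of k*n distinct automorphisms whose permutation
  matrices sum to k J_n, i.e. entry (u,w) of the sum, the number of sigma with sigma u = w, equals k.\<close>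
definition k_uniformly_vt :: "nat \<Rightarrow> 'a set \<Rightarrow> ('a \<Rightarrow> 'a \<Rightarrow> bool) \<Rightarrow> bool" where
  "k_uniformly_vt k V E \<longleftrightarrow>
     (\<exists>A. A \<subseteq> graph_aut V E \<and> finite A \<and> card A = k * card V \<and>
        (\<forall>u\<in>V. \<forall>w\<in>V. (\<Sum>\<sigma>\<in>A. (if \<sigma> u = w then 1 else 0 :: nat)) = k))"

end

theory Submission
  imports Defs
begin

text \<open>If R is a set of automorphisms acting sharply transitively on the vertices and K consists of
  k automorphisms fixing a vertex v, then the k |V| products \<rho> \<circ> \<tau> (\<rho> \<in> R, \<tau> \<in> K) are distinct:
  evaluating at v recovers \<rho>, and then \<tau>. For fixed \<tau> and vertices u, w exactly one \<rho> maps
  \<tau> u to w, so each pair (u, w) is hit exactly k times. For a Cayley graph, the right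
  translations of the group form such an R.\<close>

definition sharply_transitive_on :: "'a set \<Rightarrow> ('a \<Rightarrow> 'a) set \<Rightarrow> bool" where
  "sharply_transitive_on V R \<longleftrightarrow> (\<forall>u\<in>V. \<forall>w\<in>V. \<exists>!\<rho>. \<rho> \<in> R \<and> \<rho> u = w)"

lemma graph_aut_permutes: "\<sigma> \<in> graph_aut V E \<Longrightarrow> \<sigma> permutes V"
  unfolding graph_aut_def by blast

lemma graph_aut_comp:
  assumes "\<sigma> \<in> graph_aut V E" and "\<tau> \<in> graph_aut V E"
  shows "\<sigma> \<circ> \<tau> \<in> graph_aut V E"
proof -
  have \<tau>: "\<tau> permutes V" using assms(2) by (rule graph_aut_permutes)
  have "E u w \<longleftrightarrow> E (\<sigma> (\<tau> u)) (\<sigma> (\<tau> w))" if "u \<in> V" "w \<in> V" for u w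
    using assms that permutes_in_image[OF \<tau>] unfolding graph_aut_def by blast
  with permutes_compose[OF \<tau> graph_aut_permutes[OF assms(1)]] show ?thesis
    unfolding graph_aut_def by auto
qed

lemma sharply_transitive_on_unique:
  "sharply_transitive_on V R \<Longrightarrow> u \<in> V \<Longrightarrow> \<rho> \<in> R \<Longrightarrow> \<rho>' \<in> R \<Longrightarrow> \<rho> u \<in> V \<Longrightarrow>
    \<rho> u = \<rho>' u \<Longrightarrow> \<rho> = \<rho>'"
  unfolding sharply_transitive_on_def by metis

lemma sharply_transitive_bij_betw_eval:
  assumes "sharply_transitive_on V R" and "\<forall>\<rho>\<in>R. \<rho> permutes V" and "v \<in> V"
  shows "bij_betw (\<lambda>\<rho>. \<rho> v) R V"
proof (rule bij_betwI')
  show into: "\<rho> v \<in> V" if "\<rho> \<in> R" for \<rho>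
    using assms(2,3) that by (simp add: permutes_in_image)
  show "\<rho> v = \<rho>' v \<longleftrightarrow> \<rho> = \<rho>'" if "\<rho> \<in> R" "\<rho>' \<in> R" for \<rho> \<rho>'
    using sharply_transitive_on_unique[OF assms(1,3) that into[OF that(1)]] by auto
  show "\<exists>\<rho>\<in>R. w = \<rho> v" if "w \<in> V" for w
    using assms(1,3) that unfolding sharply_transitive_on_def by metis
qed

lemma sharply_transitive_on_count:
  assumes "sharply_transitive_on V R" and "finite R" and "u \<in> V" and "w \<in> V"
  shows "(\<Sum>\<rho>\<in>R. if \<rho> u = w then 1 else 0 :: nat) = 1"
proof -
  obtain \<rho>0 where "{\<rho> \<in> R. \<rho> u = w} = {\<rho>0}"
    using assms(1,3,4) unfolding sharply_transitive_on_def by blast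
  then show ?thesis
    using assms(2) by (simp add: sum.If_cases Int_def)
qed

lemma inj_on_comp_stabilizer:
  assumes "sharply_transitive_on V R" and "\<forall>\<rho>\<in>R. \<rho> permutes V" and "v \<in> V"
    and "\<forall>\<tau>\<in>K. \<tau> v = v"
  shows "inj_on (\<lambda>(\<rho>, \<tau>). \<rho> \<circ> \<tau>) (R \<times> K)"
proof (rule inj_onI, clarify)
  fix \<rho>1 \<tau>1 \<rho>2 \<tau>2
  assume in_R: "\<rho>1 \<in> R" "\<rho>2 \<in> R" and in_K: "\<tau>1 \<in> K" "\<tau>2 \<in> K" and eq: "\<rho>1 \<circ> \<tau>1 = \<rho>2 \<circ> \<tau>2"
  have "\<tau>1 v = v" "\<tau>2 v = v" using assms(4) in_K by blast+
  then have "\<rho>1 v = \<rho>2 v" using fun_cong[OF eq, of v] by simp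
  then have "\<rho>1 = \<rho>2"
    using sharply_transitive_bij_betw_eval[OF assms(1-3)] in_R
    by (auto dest: bij_betw_imp_inj_on inj_onD)
  have "inj \<rho>1" using assms(2) in_R permutes_inj by blast
  have "\<tau>1 x = \<tau>2 x" for x
    using fun_cong[OF eq, of x] \<open>\<rho>1 = \<rho>2\<close> injD[OF \<open>inj \<rho>1\<close>] by simp
  then have "\<tau>1 = \<tau>2" ..
  with \<open>\<rho>1 = \<rho>2\<close> show "\<rho>1 = \<rho>2 \<and> \<tau>1 = \<tau>2" ..
qed

lemma k_uniformly_vt_of_sharply_transitive:
  fixes R :: "('a \<Rightarrow> 'a) set"
  assumes "finite V" and "R \<subseteq> graph_aut V E" and "sharply_transitive_on V R" and "v \<in> V"
    and "K \<subseteq> vertex_stabilizer V E v" and "card K = k"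
  shows "k_uniformly_vt k V E"
proof -
  have R_perm: "\<forall>\<rho>\<in>R. \<rho> permutes V" using assms(2) graph_aut_permutes by blast
  have K_aut: "K \<subseteq> graph_aut V E" and K_fix: "\<forall>\<tau>\<in>K. \<tau> v = v"
    using assms(5) unfolding vertex_stabilizer_def by auto
  have bij_R: "bij_betw (\<lambda>\<rho>. \<rho> v) R V"
    using sharply_transitive_bij_betw_eval[OF assms(3) R_perm assms(4)] .
  have fin_R: "finite R" using bij_betw_finite[OF bij_R] assms(1) by simp
  have fin_K: "finite K"
    using K_aut finite_subset[OF _ finite_permutations[OF assms(1)]] graph_aut_permutes by blast
  define F :: "('a \<Rightarrow> 'a) \<times> ('a \<Rightarrow> 'a) \<Rightarrow> 'a \<Rightarrow> 'a" where "F = (\<lambda>(\<rho>, \<tau>). \<rho> \<circ> \<tau>)"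
  have inj_F: "inj_on F (R \<times> K)"
    unfolding F_def using inj_on_comp_stabilizer[OF assms(3) R_perm assms(4) K_fix] .
  have "F ` (R \<times> K) \<subseteq> graph_aut V E"
    using assms(2) K_aut by (auto simp: F_def intro!: graph_aut_comp)
  moreover have "card (F ` (R \<times> K)) = k * card V"
    using card_image[OF inj_F] bij_betw_same_card[OF bij_R] assms(6)
    by (simp add: card_cartesian_product)
  moreover have "(\<Sum>\<sigma>\<in>F ` (R \<times> K). if \<sigma> u = w then 1 else 0 :: nat) = k"
    if "u \<in> V" "w \<in> V" for u w
  proof -
    have one: "(\<Sum>\<rho>\<in>R. if \<rho> (\<tau> u) = w then 1 else 0 :: nat) = 1" if "\<tau> \<in> K" for \<tau>
    proof -
      have "\<tau> permutes V" using K_aut that graph_aut_permutes by blast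
      then have "\<tau> u \<in> V" using \<open>u \<in> V\<close> by (simp add: permutes_in_image)
      then show ?thesis by (rule sharply_transitive_on_count[OF assms(3) fin_R _ \<open>w \<in> V\<close>])
    qed
    have "(\<Sum>\<sigma>\<in>F ` (R \<times> K). if \<sigma> u = w then 1 else 0 :: nat)
        = (\<Sum>(\<rho>, \<tau>)\<in>R \<times> K. if \<rho> (\<tau> u) = w then 1 else 0)"
      by (subst sum.reindex[OF inj_F]) (simp add: F_def case_prod_beta)
    also have "\<dots> = (\<Sum>\<rho>\<in>R. \<Sum>\<tau>\<in>K. if \<rho> (\<tau> u) = w then 1 else 0)"
      by (rule sum.cartesian_product[symmetric])
    also have "\<dots> = (\<Sum>\<tau>\<in>K. \<Sum>\<rho>\<in>R. if \<rho> (\<tau> u) = w then 1 else 0)"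
      by (rule sum.swap)
    also have "\<dots> = k"
      using one assms(6) by simp
    finally show ?thesis .
  qed
  ultimately show ?thesis
    unfolding k_uniformly_vt_def using fin_R fin_K by (metis finite_imageI finite_cartesian_product)
qed

definition right_translation :: "('g, 'b) monoid_scheme \<Rightarrow> 'g \<Rightarrow> 'g \<Rightarrow> 'g" where
  "right_translation G h x = (if x \<in> carrier G then x \<otimes>\<^bsub>G\<^esub> h else x)"

lemma (in group) right_translation_eq_iff:
  assumes "h \<in> carrier G" "a \<in> carrier G" "b \<in> carrier G"
  shows "right_translation G h a = b \<longleftrightarrow> h = inv a \<otimes> b"
  using assms inv_solve_left[of h a b] by (auto simp: right_translation_def)

lemma (in group) right_translation_graph_aut:
  assumes S: "S \<subseteq> carrier G" and h: "h \<in> carrier G"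
  shows "right_translation G h \<in> graph_aut (carrier G) (cayley_adj G S)"
proof -
  have "bij_betw (right_translation G h) (carrier G) (carrier G)"
    by (rule bij_betw_byWitness[where f' = "right_translation G (inv h)"])
       (use h in \<open>auto simp: right_translation_def m_assoc\<close>)
  then have "right_translation G h permutes carrier G"
    by (rule bij_imp_permutes) (simp add: right_translation_def)
  moreover have "cayley_adj G S a b \<longleftrightarrow> cayley_adj G S (a \<otimes> h) (b \<otimes> h)"
    if "a \<in> carrier G" "b \<in> carrier G" for a b
  proof -
    have "a \<otimes> h = s \<otimes> (b \<otimes> h) \<longleftrightarrow> a = s \<otimes> b" "b \<otimes> h = s \<otimes> (a \<otimes> h) \<longleftrightarrow> b = s \<otimes> a"
      if "s \<in> S" for s
      using that S h \<open>a \<in> carrier G\<close> \<open>b \<in> carrier G\<close> by (auto simp: m_assoc[symmetric])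
    then show ?thesis unfolding cayley_adj_def by blast
  qed
  ultimately show ?thesis
    unfolding graph_aut_def by (simp add: right_translation_def)
qed

lemma (in group) sharply_transitive_right_translations:
  "sharply_transitive_on (carrier G) (right_translation G ` carrier G)"
  unfolding sharply_transitive_on_def
proof (intro ballI)
  fix a b assume a: "a \<in> carrier G" and b: "b \<in> carrier G"
  show "\<exists>!\<rho>. \<rho> \<in> right_translation G ` carrier G \<and> \<rho> a = b"
  proof
    show "right_translation G (inv a \<otimes> b) \<in> right_translation G ` carrier G \<and>
        right_translation G (inv a \<otimes> b) a = b"
      using a b right_translation_eq_iff by auto
  next
    fix \<rho> assume "\<rho> \<in> right_translation G ` carrier G \<and> \<rho> a = b"
    then obtain h where "h \<in> carrier G" "\<rho> = right_translation G h" "right_translation G h a = b"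
      by blast
    then show "\<rho> = right_translation G (inv a \<otimes> b)"
      using a b right_translation_eq_iff by simp
  qed
qed

definition pullback_perm :: "('a \<Rightarrow> 'b) \<Rightarrow> 'a set \<Rightarrow> ('b \<Rightarrow> 'b) \<Rightarrow> 'a \<Rightarrow> 'a" where
  "pullback_perm f V \<pi> u = (if u \<in> V then inv_into V f (\<pi> (f u)) else u)"

lemma pullback_perm_apply:
  assumes f: "bij_betw f V W" and \<pi>: "\<pi> permutes W" and u: "u \<in> V"
  shows "pullback_perm f V \<pi> u \<in> V" and "f (pullback_perm f V \<pi> u) = \<pi> (f u)"
proof -
  have "\<pi> (f u) \<in> W" using bij_betwE[OF f] u \<pi> by (simp add: permutes_in_image)
  then show "pullback_perm f V \<pi> u \<in> V" and "f (pullback_perm f V \<pi> u) = \<pi> (f u)"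
    using f u by (simp_all add: pullback_perm_def bij_betw_inv_into_right inv_into_into bij_betw_imp_surj_on)
qed

lemma pullback_perm_graph_aut:
  assumes f: "bij_betw f V W" and iso: "\<forall>u\<in>V. \<forall>w\<in>V. E u w \<longleftrightarrow> E' (f u) (f w)"
    and \<pi>: "\<pi> \<in> graph_aut W E'"
  shows "pullback_perm f V \<pi> \<in> graph_aut V E"
proof -
  have \<pi>_perm: "\<pi> permutes W" using \<pi> by (rule graph_aut_permutes)
  have "bij_betw (inv_into V f \<circ> \<pi> \<circ> f) V V"
    using f permutes_imp_bij[OF \<pi>_perm] bij_betw_inv_into by (blast intro: bij_betw_trans)
  then have "bij_betw (pullback_perm f V \<pi>) V V"
    by (rule bij_betw_cong[THEN iffD1, rotated]) (simp add: pullback_perm_def)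
  then have "pullback_perm f V \<pi> permutes V"
    by (rule bij_imp_permutes) (simp add: pullback_perm_def)
  moreover have "E u w \<longleftrightarrow> E (pullback_perm f V \<pi> u) (pullback_perm f V \<pi> w)"
    if "u \<in> V" "w \<in> V" for u w
  proof -
    have "E u w \<longleftrightarrow> E' (f u) (f w)" using iso that by blast
    also have "\<dots> \<longleftrightarrow> E' (\<pi> (f u)) (\<pi> (f w))"
      using \<pi> bij_betwE[OF f] that unfolding graph_aut_def by blast
    also have "\<dots> \<longleftrightarrow> E (pullback_perm f V \<pi> u) (pullback_perm f V \<pi> w)"
      using iso pullback_perm_apply[OF f \<pi>_perm] that by simp
    finally show ?thesis .
  qed
  ultimately show ?thesis unfolding graph_aut_def by blast
qed

lemma sharply_transitive_pullback:
  assumes f: "bij_betw f V W" and R_trans: "sharply_transitive_on W R"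
    and R_perm: "\<forall>\<pi>\<in>R. \<pi> permutes W"
  shows "sharply_transitive_on V (pullback_perm f V ` R)"
  unfolding sharply_transitive_on_def
proof (intro ballI)
  fix u w assume u: "u \<in> V" and w: "w \<in> V"
  have maps: "pullback_perm f V \<pi> u = w \<longleftrightarrow> \<pi> (f u) = f w" if "\<pi> \<in> R" for \<pi>
  proof -
    have "pullback_perm f V \<pi> u \<in> V" "f (pullback_perm f V \<pi> u) = \<pi> (f u)"
      using pullback_perm_apply[OF f _ u] R_perm that by auto
    then show ?thesis using f w unfolding bij_betw_def inj_on_def by metis
  qed
  obtain \<pi> where \<pi>: "\<pi> \<in> R" "\<pi> (f u) = f w" and uniq: "\<And>\<pi>'. \<pi>' \<in> R \<Longrightarrow> \<pi>' (f u) = f w \<Longrightarrow> \<pi>' = \<pi>"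
    using R_trans bij_betwE[OF f] u w unfolding sharply_transitive_on_def by metis
  show "\<exists>!\<rho>. \<rho> \<in> pullback_perm f V ` R \<and> \<rho> u = w"
  proof
    show "pullback_perm f V \<pi> \<in> pullback_perm f V ` R \<and> pullback_perm f V \<pi> u = w"
      using \<pi> maps by blast
  next
    fix \<rho> assume "\<rho> \<in> pullback_perm f V ` R \<and> \<rho> u = w"
    then obtain \<pi>' where "\<pi>' \<in> R" "\<rho> = pullback_perm f V \<pi>'" "pullback_perm f V \<pi>' u = w"
      by blast
    then show "\<rho> = pullback_perm f V \<pi>" using maps uniq by metis
  qed
qed

lemma cayley_graph_sharply_transitive_aut:
  assumes "is_cayley_graph V E"
  obtains R where "R \<subseteq> graph_aut V E" and "sharply_transitive_on V R"
proof -
  obtain G :: "'a monoid" and S f where "group G" and S: "S \<subseteq> carrier G"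
    and f: "bij_betw f V (carrier G)"
    and iso: "\<forall>u\<in>V. \<forall>w\<in>V. E u w \<longleftrightarrow> cayley_adj G S (f u) (f w)"
    using assms unfolding is_cayley_graph_def by blast
  interpret group G by fact
  let ?T = "right_translation G ` carrier G"
  have T_aut: "?T \<subseteq> graph_aut (carrier G) (cayley_adj G S)"
    using right_translation_graph_aut[OF S] by blast
  show ?thesis
  proof
    show "pullback_perm f V ` ?T \<subseteq> graph_aut V E"
      using pullback_perm_graph_aut[OF f iso] T_aut by blast
    have "\<forall>\<pi>\<in>?T. \<pi> permutes carrier G"
      using T_aut graph_aut_permutes by blast
    then show "sharply_transitive_on V (pullback_perm f V ` ?T)"
      by (rule sharply_transitive_pullback[OF f sharply_transitive_right_translations])
  qed
qed

theorem mainTheorem13: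
  fixes V :: "'a set" and E :: "'a \<Rightarrow> 'a \<Rightarrow> bool" and v :: 'a and k :: nat
  assumes "finite V"
    and "is_cayley_graph V E"
    and "v \<in> V"
    and "1 \<le> k"
    and "k \<le> card (vertex_stabilizer V E v)"
  shows "k_uniformly_vt k V E"
proof -
  obtain R where "R \<subseteq> graph_aut V E" and "sharply_transitive_on V R"
    using cayley_graph_sharply_transitive_aut[OF assms(2)] .
  moreover obtain K where "K \<subseteq> vertex_stabilizer V E v" and "card K = k"
    using obtain_subset_with_card_n[OF assms(5)] by metis
  ultimately show ?thesis
    using k_uniformly_vt_of_sharply_transitive[OF assms(1) _ _ assms(3)] by blast
qed

end
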